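(* Let $\mathrm{PARITY}:\{0,1\}^n\rightarrow\{0,1\}$, $\mathrm{PARITY}(x)=\bigoplus_i x_i$. Then $UC(\mathrm{PARITY})=WUC(\mathrm{PARITY})=n$ and $UQ(\mathrm{PARITY})=WUQ(\mathrm{PARITY})=\lceil n/2\rceil$.
   Context: Query model: a classical randomized query algorithm adaptively queries input bits $x_i$ (each query costs one) and outputs a bit; a quantum query algorithm alternates input-independent unitaries with the oracle $O_x:|i,b,z\rangle\mapsto|i,b\oplus x_i,z\rangle$ and measures an output bit. $UQ(f)$ (resp. $UC(f)$) is the minimum number of queries of a quantum (resp. classical randomized) algorithm that on every input outputs $f(x)$ with probability strictly greater than $1/2$. For an algorithm whose minimum over inputs of the success probability is $p>1/2$, its bias is $\beta=p-1/2$ and its weakly unbounded cost is (number of queries) $+\log(1/(2\beta))$; $WUQ(f)$ (resp. $WUC(f)$) is the minimum weakly unbounded cost over quantum (resp. classical randomized) algorithms. $\log$ is base 2. *)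

theory Defs
  imports "HOL-Probability.Probability" "Jordan_Normal_Form.Schur_Decomposition"
begin

text \<open>Inputs in {0,1}^n are bool lists of length n (True = 1); outputs are bools (True = 1).\<close>

definition inputs :: "nat \<Rightarrow> bool list set" where
  "inputs n = {x. length x = n}"

definition parity :: "bool list \<Rightarrow> bool" where
  "parity x = odd (length (filter id x))"

text \<open>Deterministic decision trees: Node i l r queries x_i and continues in l if x_i = 0,
  in r if x_i = 1.  A randomized query algorithm is a probability distribution over
  deterministic decision trees (the random seed is chosen first, then the algorithm adapts).\<close>

datatype dtree = Leaf bool | Node nat dtree dtree

fun dt_eval :: "dtree \<Rightarrow> bool list \<Rightarrow> bool" where
  "dt_eval (Leaf b) x = b"
| "dt_eval (Node i l r) x = (if x ! i then dt_eval r x else dt_eval l x)"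

fun dt_queries :: "dtree \<Rightarrow> bool list \<Rightarrow> nat" where
  "dt_queries (Leaf b) x = 0"
| "dt_queries (Node i l r) x = Suc (if x ! i then dt_queries r x else dt_queries l x)"

fun dt_valid :: "nat \<Rightarrow> dtree \<Rightarrow> bool" where
  "dt_valid n (Leaf b) = True"
| "dt_valid n (Node i l r) = (i < n \<and> dt_valid n l \<and> dt_valid n r)"

definition classical_alg :: "nat \<Rightarrow> nat \<Rightarrow> dtree pmf \<Rightarrow> bool" where
  "classical_alg n T A \<longleftrightarrow>
     (\<forall>t\<in>set_pmf A. dt_valid n t \<and> (\<forall>x\<in>inputs n. dt_queries t x \<le> T))"

definition classical_succ :: "dtree pmf \<Rightarrow> (bool list \<Rightarrow> bool) \<Rightarrow> bool list \<Rightarrow> real" where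
  "classical_succ A f x = measure_pmf.prob A {t. dt_eval t x = f x}"

definition classical_bias :: "nat \<Rightarrow> dtree pmf \<Rightarrow> (bool list \<Rightarrow> bool) \<Rightarrow> real" where
  "classical_bias n A f = Min ((\<lambda>x. classical_succ A f x) ` inputs n) - 1/2"

definition UC :: "nat \<Rightarrow> (bool list \<Rightarrow> bool) \<Rightarrow> nat" where
  "UC n f = (LEAST T. \<exists>A. classical_alg n T A \<and> (\<forall>x\<in>inputs n. classical_succ A f x > 1/2))"

definition WUC :: "nat \<Rightarrow> (bool list \<Rightarrow> bool) \<Rightarrow> real" where
  "WUC n f = Inf {real T + log 2 (1 / (2 * classical_bias n A f)) | T A.
                   classical_alg n T A \<and> classical_bias n A f > 0}"

text \<open>State space C^(n * 2 * W): basis state |i,b,z> (i < n, b < 2, z < W) has index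
  i * (2 * W) + b * W + z.  The query operator O_x maps |i,b,z> to |i, b xor x_i, z>.\<close>

definition qdim :: "nat \<Rightarrow> nat \<Rightarrow> nat" where
  "qdim n W = n * (2 * W)"

definition qry_perm :: "nat \<Rightarrow> bool list \<Rightarrow> nat \<Rightarrow> nat" where
  "qry_perm W x c =
     (let i = c div (2 * W); b = (c mod (2 * W)) div W; z = c mod W;
          b' = (if x ! i then 1 - b else b)
      in i * (2 * W) + b' * W + z)"

definition query_op :: "nat \<Rightarrow> nat \<Rightarrow> bool list \<Rightarrow> complex mat" where
  "query_op n W x = mat (qdim n W) (qdim n W)
     (\<lambda>(r, c). if r = qry_perm W x c then 1 else 0)"

definition unitary_mat :: "nat \<Rightarrow> complex mat \<Rightarrow> bool" where
  "unitary_mat d U \<longleftrightarrow> U \<in> carrier_mat d d \<and> mat_adjoint U * U = 1\<^sub>m d"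

text \<open>After the first unitary U0, each further unitary is preceded by one query.\<close>
fun q_run :: "complex mat \<Rightarrow> complex mat list \<Rightarrow> complex vec \<Rightarrow> complex vec" where
  "q_run Ox [] v = v"
| "q_run Ox (U # Us) v = q_run Ox Us (U *\<^sub>v (Ox *\<^sub>v v))"

definition q_final :: "nat \<Rightarrow> nat \<Rightarrow> complex mat \<Rightarrow> complex mat list \<Rightarrow> bool list \<Rightarrow> complex vec" where
  "q_final n W U0 Us x = q_run (query_op n W x) Us (U0 *\<^sub>v unit_vec (qdim n W) 0)"

text \<open>The final state is measured in the computational basis; the algorithm outputs 1 iff the
  outcome lies in the accepting set Acc.\<close>
definition q_prob1 :: "nat \<Rightarrow> nat \<Rightarrow> complex mat \<Rightarrow> complex mat list \<Rightarrow> nat set \<Rightarrow> bool list \<Rightarrow> real" where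
  "q_prob1 n W U0 Us Acc x =
     (\<Sum>j\<in>Acc \<inter> {..<qdim n W}. (cmod (q_final n W U0 Us x $ j))\<^sup>2)"

definition quantum_alg :: "nat \<Rightarrow> nat \<Rightarrow> nat \<Rightarrow> complex mat \<Rightarrow> complex mat list \<Rightarrow> bool" where
  "quantum_alg n T W U0 Us \<longleftrightarrow>
     W \<ge> 1 \<and> length Us = T \<and> unitary_mat (qdim n W) U0 \<and> (\<forall>U\<in>set Us. unitary_mat (qdim n W) U)"

definition quantum_succ ::
  "nat \<Rightarrow> nat \<Rightarrow> complex mat \<Rightarrow> complex mat list \<Rightarrow> nat set \<Rightarrow> (bool list \<Rightarrow> bool) \<Rightarrow> bool list \<Rightarrow> real" where
  "quantum_succ n W U0 Us Acc f x =
     (if f x then q_prob1 n W U0 Us Acc x else 1 - q_prob1 n W U0 Us Acc x)"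

definition quantum_bias ::
  "nat \<Rightarrow> nat \<Rightarrow> complex mat \<Rightarrow> complex mat list \<Rightarrow> nat set \<Rightarrow> (bool list \<Rightarrow> bool) \<Rightarrow> real" where
  "quantum_bias n W U0 Us Acc f = Min ((\<lambda>x. quantum_succ n W U0 Us Acc f x) ` inputs n) - 1/2"

definition UQ :: "nat \<Rightarrow> (bool list \<Rightarrow> bool) \<Rightarrow> nat" where
  "UQ n f = (LEAST T. \<exists>W U0 Us Acc. quantum_alg n T W U0 Us \<and>
                         (\<forall>x\<in>inputs n. quantum_succ n W U0 Us Acc f x > 1/2))"

definition WUQ :: "nat \<Rightarrow> (bool list \<Rightarrow> bool) \<Rightarrow> real" where
  "WUQ n f = Inf {real T + log 2 (1 / (2 * quantum_bias n W U0 Us Acc f)) | T W U0 Us Acc.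
                   quantum_alg n T W U0 Us \<and> quantum_bias n W U0 Us Acc f > 0}"

end

theory Submission
  imports Defs
begin

text \<open>
  Classically, a decision tree that reads fewer than \<open>n\<close> bits of \<open>x\<close> leaves some bit unread, and
  flipping it changes the parity but not the output: every deterministic tree with fewer than
  \<open>n\<close> queries is correct on exactly half of the inputs, so no randomized one has success
  probability above \<open>1/2\<close> on all inputs. Quantumly, after \<open>T\<close> queries every amplitude is a
  polynomial of degree at most \<open>T\<close> in the input bits, so the acceptance probability is one of
  degree at most \<open>2T\<close>; parity, i.e. \<open>(-1)^|x|\<close>, is orthogonal to all polynomials of degree
  below \<open>n\<close>, which forces \<open>2T \<ge> n\<close>. Conversely, conjugating the oracle by Hadamard gates turns
  it into a phase oracle, and one phase query on the superposition \<open>(|i\<rangle> + (-1)^c |j\<rangle>)/\<surd>2\<close> of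
  two bit positions adds \<open>x\<^sub>i + x\<^sub>j\<close> to the relative phase \<open>c\<close>. Moving this superposition
  through the \<open>\<lceil>n/2\<rceil>\<close> pairs of bits accumulates \<open>|x|\<close>, and a final Hadamard transform reads off
  its parity with certainty. Both algorithms have bias \<open>1/2\<close>, so the weakly unbounded costs
  equal the query counts.
\<close>

no_notation vec_nth (infixl \<open>$\<close> 90)

definition weight :: "bool list \<Rightarrow> nat" where
  "weight x = length (filter id x)"

lemma parity_eq_odd_weight: "parity x = odd (weight x)"
  unfolding parity_def weight_def ..

lemma weight_append: "weight (xs @ ys) = weight xs + weight ys"
  unfolding weight_def by simp

definition flip :: "nat \<Rightarrow> bool list \<Rightarrow> bool list" where
  "flip j x = x[j := \<not> x ! j]"

lemma length_flip [simp]: "length (flip j x) = length x"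
  unfolding flip_def by simp

lemma flip_flip [simp]: "flip j (flip j x) = x"
  unfolding flip_def by (cases "j < length x") (auto simp: list_update_beyond)

lemma nth_flip: "flip j x ! i = (if i = j \<and> j < length x then \<not> x ! i else x ! i)"
  unfolding flip_def by (auto simp: nth_list_update list_update_beyond)

lemma odd_weight_flip: "j < length x \<Longrightarrow> odd (weight (flip j x)) \<longleftrightarrow> even (weight x)"
proof (induction x arbitrary: j)
  case (Cons a x)
  then show ?case by (cases j) (auto simp: flip_def weight_def)
qed simp

lemma parity_flip: "j < length x \<Longrightarrow> parity (flip j x) \<longleftrightarrow> \<not> parity x"
  by (simp add: parity_eq_odd_weight odd_weight_flip)

lemma flip_in_inputs: "x \<in> inputs n \<Longrightarrow> flip j x \<in> inputs n"
  unfolding inputs_def by simp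

lemma finite_inputs [simp]: "finite (inputs n)"
  unfolding inputs_def using finite_lists_length_eq[of "UNIV :: bool set" n] by simp

lemma card_inputs: "card (inputs n) = 2 ^ n"
  unfolding inputs_def using card_lists_length_eq[of "UNIV :: bool set" n] by (simp add: card_UNIV_bool)

lemma zero_input_in_inputs: "replicate n False \<in> inputs n"
  unfolding inputs_def by simp

lemma inputs_nonempty: "inputs n \<noteq> {}"
  using zero_input_in_inputs by blast

lemma ex_less_notin:
  assumes "finite S" "card S < n"
  obtains j where "j < n" "j \<notin> S"
proof -
  have "\<not> {..<n} \<subseteq> S"
  proof
    assume "{..<n} \<subseteq> S"
    then have "card {..<n} \<le> card S" by (rule card_mono[OF assms(1)])
    with assms(2) show False by simp
  qed
  then show ?thesis using that by blast
qed

lemma succ_gt_half_if_bias_pos: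
  fixes f :: "'a \<Rightarrow> real"
  assumes "finite I" "Min (f ` I) - 1/2 > 0" "x \<in> I"
  shows "f x > 1/2"
proof -
  have "Min (f ` I) \<le> f x" using assms(1,3) by simp
  with assms(2) show ?thesis by linarith
qed

lemma bias_le_half:
  fixes f :: "'a \<Rightarrow> real"
  assumes "finite I" "x \<in> I" "f x \<le> 1"
  shows "Min (f ` I) - 1/2 \<le> 1/2"
proof -
  have "Min (f ` I) \<le> f x" using assms(1,2) by simp
  with assms(3) show ?thesis by linarith
qed

lemma bias_eq_half_if_always_correct:
  fixes f :: "'a \<Rightarrow> real"
  assumes "finite I" "I \<noteq> {}" "\<And>x. x \<in> I \<Longrightarrow> f x = 1"
  shows "Min (f ` I) - 1/2 = 1/2"
proof -
  have "f ` I = {1}" using assms(2,3) by auto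
  then show ?thesis by simp
qed

lemma Inf_weak_cost_eq:
  fixes bias :: "'a \<Rightarrow> real"
  assumes "P T0 A0" "bias A0 = 1/2"
    and "\<And>T A. P T A \<Longrightarrow> 0 < bias A \<Longrightarrow> T0 \<le> T \<and> bias A \<le> 1/2"
  shows "Inf {real T + log 2 (1 / (2 * bias A)) | T A. P T A \<and> 0 < bias A} = real T0"
proof (rule cInf_eq_minimum)
  have "real T0 = real T0 + log 2 (1 / (2 * bias A0)) \<and> P T0 A0 \<and> 0 < bias A0"
    using assms(1,2) by (simp add: mult.commute)
  then show "real T0 \<in> {real T + log 2 (1 / (2 * bias A)) | T A. P T A \<and> 0 < bias A}"
    by blast
next
  fix y assume "y \<in> {real T + log 2 (1 / (2 * bias A)) | T A. P T A \<and> 0 < bias A}"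
  then obtain T A where y: "y = real T + log 2 (1 / (2 * bias A))" and "P T A" "0 < bias A"
    by blast
  with assms(3) have "T0 \<le> T" "0 < bias A" "bias A \<le> 1/2" by auto
  then have "0 \<le> log 2 (1 / (2 * bias A))" by simp
  with \<open>T0 \<le> T\<close> show "real T0 \<le> y" unfolding y by linarith
qed

lemma ex_le_if_sum_le:
  fixes f :: "'a \<Rightarrow> real"
  assumes "finite I" "I \<noteq> {}" "(\<Sum>x\<in>I. f x) \<le> real (card I) * c"
  shows "\<exists>x\<in>I. f x \<le> c"
proof (rule ccontr)
  assume "\<not> ?thesis"
  then have "(\<Sum>x\<in>I. c) < (\<Sum>x\<in>I. f x)" using assms(1,2) by (intro sum_strict_mono) auto
  with assms(3) show False by simp
qed

section \<open>Classical query complexity of PARITY\<close>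

fun queried :: "dtree \<Rightarrow> bool list \<Rightarrow> nat set" where
  "queried (Leaf b) x = {}"
| "queried (Node i l r) x = insert i (if x ! i then queried r x else queried l x)"

lemma finite_queried: "finite (queried t x)"
  by (induction t) auto

lemma card_queried_le: "card (queried t x) \<le> dt_queries t x"
proof (induction t)
  case (Node i l r)
  then show ?case by (auto simp: card_insert_if finite_queried)
qed simp

lemma queried_eq_and_dt_eval_eq:
  assumes "\<forall>i\<in>queried t x. y ! i = x ! i"
  shows "queried t y = queried t x \<and> dt_eval t y = dt_eval t x"
  using assms by (induction t) auto

lemma card_half_if_involution:
  assumes "finite A"
    and "\<And>x. x \<in> A \<Longrightarrow> \<phi> x \<in> A \<and> \<phi> (\<phi> x) = x \<and> (P (\<phi> x) \<longleftrightarrow> \<not> P x)"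
  shows "2 * card {x \<in> A. P x} = card A"
proof -
  have "bij_betw \<phi> {x \<in> A. P x} {x \<in> A. \<not> P x}"
    by (rule bij_betw_byWitness[where f' = \<phi>]) (use assms(2) in auto)
  then have "card {x \<in> A. P x} = card {x \<in> A. \<not> P x}"
    by (rule bij_betw_same_card)
  moreover have "card ({x \<in> A. P x} \<union> {x \<in> A. \<not> P x}) = card {x \<in> A. P x} + card {x \<in> A. \<not> P x}"
    using assms(1) by (intro card_Un_disjoint) auto
  moreover have "{x \<in> A. P x} \<union> {x \<in> A. \<not> P x} = A" by blast
  ultimately show ?thesis by simp
qed

text \<open>Flipping the least bit the tree does not read on \<open>x\<close> changes the parity but neither the
  output nor the set of bits read, so it pairs correct inputs with incorrect ones.\<close>

lemma dt_correct_on_half: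
  assumes "\<forall>x\<in>inputs n. dt_queries t x < n"
  shows "2 * card {x \<in> inputs n. dt_eval t x = parity x} = 2 ^ n"
proof -
  define J where "J x = (LEAST j. j < n \<and> j \<notin> queried t x)" for x
  have J: "J x < n \<and> J x \<notin> queried t x" if "x \<in> inputs n" for x
  proof -
    have "dt_queries t x < n" using assms that by blast
    then have "card (queried t x) < n" using card_queried_le[of t x] by linarith
    then obtain j where "j < n" "j \<notin> queried t x"
      by (rule ex_less_notin[OF finite_queried])
    then have "j < n \<and> j \<notin> queried t x" ..
    then show ?thesis unfolding J_def by (rule LeastI)
  qed
  have "2 * card {x \<in> inputs n. dt_eval t x = parity x} = card (inputs n)"
  proof (rule card_half_if_involution[where \<phi> = "\<lambda>x. flip (J x) x"])
    fix x assume x: "x \<in> inputs n"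
    have "\<forall>i\<in>queried t x. flip (J x) x ! i = x ! i"
      using J[OF x] by (auto simp: nth_flip)
    then have "queried t (flip (J x) x) = queried t x" and eval: "dt_eval t (flip (J x) x) = dt_eval t x"
      using queried_eq_and_dt_eval_eq by blast+
    then have "J (flip (J x) x) = J x" unfolding J_def by (simp only:)
    then have "flip (J (flip (J x) x)) (flip (J x) x) = x" by (simp only: flip_flip)
    moreover have "parity (flip (J x) x) \<longleftrightarrow> \<not> parity x"
      using J[OF x] x by (simp add: inputs_def parity_flip)
    ultimately show "flip (J x) x \<in> inputs n \<and> flip (J (flip (J x) x)) (flip (J x) x) = x \<and>
        (dt_eval t (flip (J x) x) = parity (flip (J x) x)) = (dt_eval t x \<noteq> parity x)"
      using flip_in_inputs[OF x] by (simp only: eval) simp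
  qed simp
  then show ?thesis by (simp add: card_inputs)
qed

lemma classical_succ_sum_eq:
  assumes alg: "classical_alg n T A" and "T < n"
  shows "(\<Sum>x\<in>inputs n. classical_succ A parity x) = 2 ^ n / 2"
proof -
  let ?correct = "\<lambda>x. {t. dt_eval t x = parity x}"
  have "(\<Sum>x\<in>inputs n. classical_succ A parity x)
      = (\<Sum>x\<in>inputs n. \<integral>t. indicator (?correct x) t \<partial>measure_pmf A)"
    by (simp add: classical_succ_def)
  also have "\<dots> = \<integral>t. (\<Sum>x\<in>inputs n. indicator (?correct x) t) \<partial>measure_pmf A"
    by (rule sym, rule Bochner_Integration.integral_sum)
      (auto intro!: integrable_real_indicator simp: less_top[symmetric] measure_pmf.emeasure_finite)
  also have "\<dots> = \<integral>t. 2 ^ n / 2 \<partial>measure_pmf A"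
  proof (rule integral_cong_AE)
    show "AE t in measure_pmf A. (\<Sum>x\<in>inputs n. indicator (?correct x) t) = (2 ^ n / 2 :: real)"
      unfolding AE_measure_pmf_iff
    proof
      fix t assume "t \<in> set_pmf A"
      then have "\<forall>x\<in>inputs n. dt_queries t x < n"
        using alg \<open>T < n\<close> unfolding classical_alg_def by force
      then have "real (2 * card {x \<in> inputs n. dt_eval t x = parity x}) = 2 ^ n"
        by (simp only: dt_correct_on_half) simp
      then show "(\<Sum>x\<in>inputs n. indicator (?correct x) t) = (2 ^ n / 2 :: real)"
        by (simp add: indicator_def sum.If_cases Int_def)
    qed
  qed auto
  finally show ?thesis by simp
qed

lemma classical_parity_lower_bound:
  assumes "classical_alg n T A" "\<forall>x\<in>inputs n. classical_succ A parity x > 1/2"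
  shows "n \<le> T"
proof (rule ccontr)
  assume "\<not> n \<le> T"
  then have "\<exists>x\<in>inputs n. classical_succ A parity x \<le> 1/2"
    using classical_succ_sum_eq[OF assms(1)] card_inputs inputs_nonempty
    by (intro ex_le_if_sum_le) auto
  with assms(2) show False by force
qed

fun parity_tree :: "nat \<Rightarrow> nat \<Rightarrow> bool \<Rightarrow> dtree" where
  "parity_tree 0 k acc = Leaf acc"
| "parity_tree (Suc r) k acc = Node k (parity_tree r (Suc k) acc) (parity_tree r (Suc k) (\<not> acc))"

lemma dt_eval_parity_tree:
  "k + r \<le> length x \<Longrightarrow> dt_eval (parity_tree r k acc) x \<longleftrightarrow> acc \<noteq> parity (take r (drop k x))"
proof (induction r arbitrary: k acc)
  case (Suc r)
  then have "drop k x = x ! k # drop (Suc k) x" by (simp add: Cons_nth_drop_Suc)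
  with Suc show ?case by (auto simp: parity_def)
qed (simp add: parity_def)

lemma dt_queries_parity_tree: "dt_queries (parity_tree r k acc) x = r"
  by (induction r arbitrary: k acc) auto

lemma dt_valid_parity_tree: "k + r \<le> n \<Longrightarrow> dt_valid n (parity_tree r k acc)"
  by (induction r arbitrary: k acc) auto

definition parity_alg :: "nat \<Rightarrow> dtree pmf" where
  "parity_alg n = return_pmf (parity_tree n 0 False)"

lemma classical_alg_parity_alg: "classical_alg n n (parity_alg n)"
  unfolding classical_alg_def parity_alg_def
  by (simp add: dt_queries_parity_tree dt_valid_parity_tree)

lemma classical_succ_parity_alg: "x \<in> inputs n \<Longrightarrow> classical_succ (parity_alg n) parity x = 1"
  unfolding classical_succ_def parity_alg_def inputs_def by (simp add: dt_eval_parity_tree)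

lemma UC_parity: "UC n parity = n"
  unfolding UC_def
proof (rule Least_equality)
  show "\<exists>A. classical_alg n n A \<and> (\<forall>x\<in>inputs n. 1/2 < classical_succ A parity x)"
    using classical_alg_parity_alg classical_succ_parity_alg by fastforce
next
  fix T assume "\<exists>A. classical_alg n T A \<and> (\<forall>x\<in>inputs n. 1/2 < classical_succ A parity x)"
  then show "n \<le> T" using classical_parity_lower_bound by blast
qed

lemma WUC_parity: "WUC n parity = real n"
  unfolding WUC_def
proof (rule Inf_weak_cost_eq)
  show "classical_alg n n (parity_alg n)" by (rule classical_alg_parity_alg)
  show "classical_bias n (parity_alg n) parity = 1/2"
    unfolding classical_bias_def
    by (rule bias_eq_half_if_always_correct) (simp_all add: inputs_nonempty classical_succ_parity_alg)
next
  fix T A assume alg: "classical_alg n T A" and pos: "0 < classical_bias n A parity"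
  have "\<forall>x\<in>inputs n. classical_succ A parity x > 1/2"
    using succ_gt_half_if_bias_pos[OF finite_inputs] pos unfolding classical_bias_def by blast
  then have "n \<le> T" by (rule classical_parity_lower_bound[OF alg])
  moreover have "classical_bias n A parity \<le> 1/2"
    unfolding classical_bias_def
    by (rule bias_le_half[OF finite_inputs zero_input_in_inputs]) (simp add: classical_succ_def)
  ultimately show "n \<le> T \<and> classical_bias n A parity \<le> 1/2" by simp
qed

section \<open>Polynomials in the input bits\<close>

definition bool_monomial :: "nat set \<Rightarrow> bool list \<Rightarrow> complex" where
  "bool_monomial S x = (if \<forall>i\<in>S. x ! i then 1 else 0)"

inductive poly_deg_le :: "nat \<Rightarrow> (bool list \<Rightarrow> complex) \<Rightarrow> bool" for d where
  monomial: "finite S \<Longrightarrow> card S \<le> d \<Longrightarrow> poly_deg_le d (\<lambda>x. c * bool_monomial S x)"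
| add: "poly_deg_le d f \<Longrightarrow> poly_deg_le d g \<Longrightarrow> poly_deg_le d (\<lambda>x. f x + g x)"

lemma poly_deg_le_const: "poly_deg_le d (\<lambda>x. c)"
  using poly_deg_le.monomial[of "{}" d c] by (simp add: bool_monomial_def)

lemma poly_deg_le_mono: "poly_deg_le d f \<Longrightarrow> d \<le> e \<Longrightarrow> poly_deg_le e f"
proof (induction rule: poly_deg_le.induct)
  case (monomial S c)
  then show ?case by (intro poly_deg_le.monomial) auto
next
  case (add f g)
  then show ?case by (intro poly_deg_le.add)
qed

lemma poly_deg_le_scale: "poly_deg_le d f \<Longrightarrow> poly_deg_le d (\<lambda>x. a * f x)"
proof (induction rule: poly_deg_le.induct)
  case (monomial S c)
  then have "poly_deg_le d (\<lambda>x. (a * c) * bool_monomial S x)" by (intro poly_deg_le.monomial)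
  then show ?case by (simp add: mult.assoc)
next
  case (add f g)
  then have "poly_deg_le d (\<lambda>x. a * f x + a * g x)" by (intro poly_deg_le.add)
  then show ?case by (simp add: distrib_left)
qed

lemma poly_deg_le_sum:
  "finite I \<Longrightarrow> (\<And>i. i \<in> I \<Longrightarrow> poly_deg_le d (f i)) \<Longrightarrow> poly_deg_le d (\<lambda>x. \<Sum>i\<in>I. f i x)"
proof (induction I rule: finite_induct)
  case empty
  then show ?case using poly_deg_le_const[of d 0] by simp
next
  case (insert a I)
  then have "poly_deg_le d (\<lambda>x. f a x + (\<Sum>i\<in>I. f i x))" by (intro poly_deg_le.add) auto
  with insert show ?case by simp
qed

lemma bool_monomial_mult: "bool_monomial S x * bool_monomial T x = bool_monomial (S \<union> T) x"
  unfolding bool_monomial_def by auto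

lemma poly_deg_le_mult_monomial:
  assumes "poly_deg_le e g" "finite S" "card S \<le> d"
  shows "poly_deg_le (d + e) (\<lambda>x. c * bool_monomial S x * g x)"
  using assms(1)
proof (induction rule: poly_deg_le.induct)
  case (monomial T c')
  have "card (S \<union> T) \<le> d + e" using card_Un_le[of S T] monomial assms by linarith
  then have "poly_deg_le (d + e) (\<lambda>x. (c * c') * bool_monomial (S \<union> T) x)"
    using monomial assms by (intro poly_deg_le.monomial) auto
  then show ?case by (simp add: bool_monomial_mult[symmetric] mult_ac)
next
  case (add f g)
  then have "poly_deg_le (d + e) (\<lambda>x. c * bool_monomial S x * f x + c * bool_monomial S x * g x)"
    by (intro poly_deg_le.add)
  then show ?case by (simp add: distrib_left)
qed

lemma poly_deg_le_mult:
  "poly_deg_le d f \<Longrightarrow> poly_deg_le e g \<Longrightarrow> poly_deg_le (d + e) (\<lambda>x. f x * g x)"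
proof (induction rule: poly_deg_le.induct)
  case (monomial S c)
  then show ?case using poly_deg_le_mult_monomial by blast
next
  case (add f1 f2)
  then have "poly_deg_le (d + e) (\<lambda>x. f1 x * g x + f2 x * g x)" by (intro poly_deg_le.add)
  then show ?case by (simp add: distrib_right)
qed

lemma poly_deg_le_cnj: "poly_deg_le d f \<Longrightarrow> poly_deg_le d (\<lambda>x. cnj (f x))"
proof (induction rule: poly_deg_le.induct)
  case (monomial S c)
  then have "poly_deg_le d (\<lambda>x. cnj c * bool_monomial S x)" by (intro poly_deg_le.monomial)
  moreover have "(\<lambda>x. cnj (c * bool_monomial S x)) = (\<lambda>x. cnj c * bool_monomial S x)"
    by (auto simp: bool_monomial_def)
  ultimately show ?case by simp
next
  case (add f g)
  then have "poly_deg_le d (\<lambda>x. cnj (f x) + cnj (g x))" by (intro poly_deg_le.add)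
  then show ?case by simp
qed

text \<open>\<open>(if x\<^sub>i then g else f) = f + x\<^sub>i (g - f)\<close>\<close>

lemma poly_deg_le_if_nth:
  assumes "poly_deg_le d f" "poly_deg_le d g"
  shows "poly_deg_le (Suc d) (\<lambda>x. if x ! i then g x else f x)"
proof -
  have "poly_deg_le (1 + d) (\<lambda>x. 1 * bool_monomial {i} x * g x)"
    by (rule poly_deg_le_mult_monomial[OF assms(2)]) simp_all
  moreover have "poly_deg_le (1 + d) (\<lambda>x. -1 * bool_monomial {i} x * f x)"
    by (rule poly_deg_le_mult_monomial[OF assms(1)]) simp_all
  moreover have "poly_deg_le (1 + d) f" using poly_deg_le_mono[OF assms(1)] by simp
  ultimately have "poly_deg_le (1 + d)
      (\<lambda>x. f x + (1 * bool_monomial {i} x * g x + -1 * bool_monomial {i} x * f x))"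
    by (intro poly_deg_le.add)
  moreover have "(\<lambda>x. f x + (1 * bool_monomial {i} x * g x + -1 * bool_monomial {i} x * f x))
      = (\<lambda>x. if x ! i then g x else f x)"
    by (auto simp: bool_monomial_def)
  ultimately show ?thesis by simp
qed

lemma sum_parity_sign_eq_0_if_flip_invariant:
  assumes "j < n" and inv: "\<And>x. x \<in> inputs n \<Longrightarrow> g (flip j x) = g x"
  shows "(\<Sum>x\<in>inputs n. (-1) ^ weight x * g x) = (0 :: complex)"
proof -
  let ?F = "\<lambda>x. (-1) ^ weight x * g x"
  have neg: "?F (flip j x) = - ?F x" if x: "x \<in> inputs n" for x
  proof -
    have "odd (weight (flip j x)) \<longleftrightarrow> even (weight x)"
      using x \<open>j < n\<close> by (simp add: inputs_def odd_weight_flip)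
    then have "(-1 :: complex) ^ weight (flip j x) = - ((-1) ^ weight x)"
      by (cases "even (weight x)") auto
    then show ?thesis using inv[OF x] by simp
  qed
  have "(\<Sum>x\<in>inputs n. ?F x) = (\<Sum>x\<in>inputs n. ?F (flip j x))"
    by (rule sum.reindex_bij_witness[where i = "flip j" and j = "flip j"]) (auto simp: flip_in_inputs)
  also have "\<dots> = - (\<Sum>x\<in>inputs n. ?F x)"
    by (simp add: neg sum_negf)
  finally show ?thesis by simp
qed

text \<open>Parity is orthogonal to every polynomial of degree below \<open>n\<close>: each monomial misses
  some variable, and flipping that variable pairs off the terms of the sum.\<close>

lemma sum_parity_sign_poly_eq_0:
  "poly_deg_le d f \<Longrightarrow> d < n \<Longrightarrow> (\<Sum>x\<in>inputs n. (-1) ^ weight x * f x) = (0 :: complex)"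
proof (induction rule: poly_deg_le.induct)
  case (monomial S c)
  then have "card S < n" by simp
  then obtain j where "j < n" "j \<notin> S" by (rule ex_less_notin[OF monomial(1)])
  then show ?case
    by (intro sum_parity_sign_eq_0_if_flip_invariant[of j]) (auto simp: bool_monomial_def nth_flip)
next
  case (add f g)
  then show ?case by (simp add: distrib_left sum.distrib)
qed

lemma mult_mat_vec_nth_sum:
  assumes "U \<in> carrier_mat d d" "j < d" "w \<in> carrier_vec d"
  shows "(U *\<^sub>v w) $ j = (\<Sum>c<d. U $$ (j, c) * w $ c)"
  using assms by (simp add: scalar_prod_def lessThan_atLeast0 mult.commute)

lemma mat_mult_vec_nth:
  assumes "v \<in> carrier_vec d" "r < d"
  shows "(mat d d g *\<^sub>v v) $ r = (\<Sum>c<d. g (r, c) * v $ c)"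
proof -
  have "(mat d d g *\<^sub>v v) $ r = (\<Sum>c<d. mat d d g $$ (r, c) * v $ c)"
    using assms by (intro mult_mat_vec_nth_sum) auto
  also have "\<dots> = (\<Sum>c<d. g (r, c) * v $ c)"
    using assms(2) by (intro sum.cong) auto
  finally show ?thesis .
qed

lemma mat_adjoint_carrier: "M \<in> carrier_mat d d \<Longrightarrow> mat_adjoint M \<in> carrier_mat d d"
  unfolding mat_adjoint_def by auto

lemma mat_adjoint_index:
  "M \<in> carrier_mat d d \<Longrightarrow> i < d \<Longrightarrow> j < d \<Longrightarrow> mat_adjoint M $$ (i, j) = cnj (M $$ (j, i))"
  unfolding mat_adjoint_def by (auto simp: mat_of_rows_index)

lemma mat_adjoint_mult:
  fixes A B :: "complex mat"
  assumes A: "A \<in> carrier_mat d d" and B: "B \<in> carrier_mat d d"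
  shows "mat_adjoint (A * B) = mat_adjoint B * mat_adjoint A"
proof (rule eq_matI)
  fix i j assume "i < dim_row (mat_adjoint B * mat_adjoint A)" "j < dim_col (mat_adjoint B * mat_adjoint A)"
  then have i: "i < d" and j: "j < d" using mat_adjoint_carrier[OF A] mat_adjoint_carrier[OF B] by auto
  have "mat_adjoint (A * B) $$ (i, j) = cnj (\<Sum>k<d. A $$ (j, k) * B $$ (k, i))"
    using A B i j by (simp add: mat_adjoint_index[of _ d] scalar_prod_def lessThan_atLeast0)
  also have "\<dots> = (\<Sum>k<d. cnj (B $$ (k, i)) * cnj (A $$ (j, k)))"
    by (simp add: mult.commute)
  also have "\<dots> = (mat_adjoint B * mat_adjoint A) $$ (i, j)"
    using mat_adjoint_carrier[OF A] mat_adjoint_carrier[OF B] i j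
    by (simp add: scalar_prod_def lessThan_atLeast0 mat_adjoint_index[OF A] mat_adjoint_index[OF B])
  finally show "mat_adjoint (A * B) $$ (i, j) = (mat_adjoint B * mat_adjoint A) $$ (i, j)" .
qed (use A B mat_adjoint_carrier[of "A * B" d] mat_adjoint_carrier[OF A] mat_adjoint_carrier[OF B] in auto)

lemma unitary_mat_mult:
  assumes "unitary_mat d A" "unitary_mat d B"
  shows "unitary_mat d (A * B)"
proof -
  have A: "A \<in> carrier_mat d d" and B: "B \<in> carrier_mat d d"
    and a: "mat_adjoint A * A = 1\<^sub>m d" and b: "mat_adjoint B * B = 1\<^sub>m d"
    using assms unfolding unitary_mat_def by auto
  have A': "mat_adjoint A \<in> carrier_mat d d" and B': "mat_adjoint B \<in> carrier_mat d d"
    using A B mat_adjoint_carrier by auto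
  have "mat_adjoint (A * B) * (A * B) = mat_adjoint B * (mat_adjoint A * A) * B"
    using A B A' B' by (simp add: mat_adjoint_mult assoc_mult_mat[of _ d d _ d _ d])
  also have "\<dots> = 1\<^sub>m d" using a b B B' by simp
  finally show ?thesis unfolding unitary_mat_def using A B by auto
qed

lemma mat_eq_if_mult_vec_eq:
  fixes A B :: "complex mat"
  assumes "A \<in> carrier_mat d d" "B \<in> carrier_mat d d"
    and "\<And>v. v \<in> carrier_vec d \<Longrightarrow> A *\<^sub>v v = B *\<^sub>v v"
  shows "A = B"
proof (rule eq_matI)
  fix i j assume "i < dim_row B" "j < dim_col B"
  then have i: "i < d" and j: "j < d" using assms(2) by auto
  have "(A *\<^sub>v unit_vec d j) $ i = (B *\<^sub>v unit_vec d j) $ i" using assms(3) by simp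
  then show "A $$ (i, j) = B $$ (i, j)" using assms(1,2) i j by (simp add: index_row(1))
qed (use assms in auto)

lemma unitary_mat_if_hermitian_involution:
  assumes M: "M \<in> carrier_mat d d"
    and herm: "\<And>i j. i < d \<Longrightarrow> j < d \<Longrightarrow> cnj (M $$ (j, i)) = M $$ (i, j)"
    and inv: "\<And>v. v \<in> carrier_vec d \<Longrightarrow> M *\<^sub>v (M *\<^sub>v v) = v"
  shows "unitary_mat d M"
proof -
  have "mat_adjoint M = M"
    by (rule eq_matI) (use M mat_adjoint_carrier[OF M] mat_adjoint_index[OF M] herm in auto)
  moreover have "M * M = 1\<^sub>m d"
    by (rule mat_eq_if_mult_vec_eq[of _ d]) (use M inv in auto)
  ultimately show ?thesis unfolding unitary_mat_def using M by simp
qed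

lemma sum_lessThan_eq_single:
  fixes f :: "nat \<Rightarrow> 'a::comm_monoid_add"
  assumes "a < d" "\<And>c. c < d \<Longrightarrow> c \<noteq> a \<Longrightarrow> f c = 0"
  shows "(\<Sum>c<d. f c) = f a"
  using sum.mono_neutral_right[of "{..<d}" "{a}" f] assms by auto

lemma sum_lessThan_eq_pair:
  fixes f :: "nat \<Rightarrow> 'a::comm_monoid_add"
  assumes "a < d" "b < d" "a \<noteq> b" "\<And>c. c < d \<Longrightarrow> c \<noteq> a \<Longrightarrow> c \<noteq> b \<Longrightarrow> f c = 0"
  shows "(\<Sum>c<d. f c) = f a + f b"
  using sum.mono_neutral_right[of "{..<d}" "{a, b}" f] assms by auto

definition inv_sqrt2 :: complex where
  "inv_sqrt2 = complex_of_real (1 / sqrt 2)"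

lemma inv_sqrt2_sq: "inv_sqrt2 * inv_sqrt2 = 1/2"
  unfolding inv_sqrt2_def of_real_mult[symmetric] by simp

lemma inv_sqrt2_butterfly [simp]:
  "inv_sqrt2 * (inv_sqrt2 * p + inv_sqrt2 * q) + inv_sqrt2 * (inv_sqrt2 * p - inv_sqrt2 * q) = p"
  "inv_sqrt2 * (inv_sqrt2 * p + inv_sqrt2 * q) - inv_sqrt2 * (inv_sqrt2 * p - inv_sqrt2 * q) = q"
  "inv_sqrt2 * (inv_sqrt2 * p - inv_sqrt2 * q) + inv_sqrt2 * (inv_sqrt2 * p + inv_sqrt2 * q) = p"
  "inv_sqrt2 * (inv_sqrt2 * p - inv_sqrt2 * q) - inv_sqrt2 * (inv_sqrt2 * p + inv_sqrt2 * q) = - q"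
  by (simp_all add: algebra_simps flip: mult.assoc add: inv_sqrt2_sq)

lemma cnj_inv_sqrt2 [simp]: "cnj inv_sqrt2 = inv_sqrt2"
  unfolding inv_sqrt2_def by simp

text \<open>For workspace \<open>W = 1\<close> this is the Hadamard transform on \<open>b\<close> in \<open>|i,b\<rangle>\<close>.\<close>

definition hadamard_blocks :: "nat \<Rightarrow> complex mat" where
  "hadamard_blocks d = mat d d (\<lambda>(r, c).
     if r div 2 = c div 2 then (if odd r \<and> odd c then - inv_sqrt2 else inv_sqrt2) else 0)"

lemma hadamard_blocks_carrier [simp]: "hadamard_blocks d \<in> carrier_mat d d"
  unfolding hadamard_blocks_def by simp

lemma hadamard_blocks_mult_vec_carrier [simp]: "hadamard_blocks d *\<^sub>v v \<in> carrier_vec d"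
  by (intro carrier_vecI) (simp add: hadamard_blocks_def)

lemma hadamard_blocks_mult_vec_nth:
  assumes "even d" "v \<in> carrier_vec d" "r < d"
  shows "(hadamard_blocks d *\<^sub>v v) $ r = inv_sqrt2 * v $ (2 * (r div 2))
    + (if odd r then - inv_sqrt2 else inv_sqrt2) * v $ (2 * (r div 2) + 1)"
proof -
  let ?g = "\<lambda>(r, c). if r div 2 = c div 2 then (if odd r \<and> odd c then - inv_sqrt2 else inv_sqrt2) else 0"
  have "2 * (r div 2) < d" "2 * (r div 2) + 1 < d" using assms(1,3) by presburger+
  then have "(\<Sum>c<d. ?g (r, c) * v $ c)
      = ?g (r, 2 * (r div 2)) * v $ (2 * (r div 2)) + ?g (r, 2 * (r div 2) + 1) * v $ (2 * (r div 2) + 1)"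
  proof (rule sum_lessThan_eq_pair)
    fix c assume "c \<noteq> 2 * (r div 2)" "c \<noteq> 2 * (r div 2) + 1"
    then have "r div 2 \<noteq> c div 2" by presburger
    then show "?g (r, c) * v $ c = 0" by simp
  qed simp
  then show ?thesis unfolding hadamard_blocks_def mat_mult_vec_nth[OF assms(2,3)] by simp
qed

lemma hadamard_blocks_involution:
  assumes d: "even d" and v: "v \<in> carrier_vec d"
  shows "hadamard_blocks d *\<^sub>v (hadamard_blocks d *\<^sub>v v) = v"
proof (rule eq_vecI)
  fix r assume "r < dim_vec v"
  then have r: "r < d" using v by simp
  define i where "i = r div 2"
  have i: "2 * i < d" "2 * i + 1 < d" using r d unfolding i_def by presburger+
  have Gv: "hadamard_blocks d *\<^sub>v v \<in> carrier_vec d" by simp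
  have "(hadamard_blocks d *\<^sub>v (hadamard_blocks d *\<^sub>v v)) $ r
      = inv_sqrt2 * (inv_sqrt2 * v $ (2 * i) + inv_sqrt2 * v $ (2 * i + 1))
        + (if odd r then - inv_sqrt2 else inv_sqrt2) * (inv_sqrt2 * v $ (2 * i) - inv_sqrt2 * v $ (2 * i + 1))"
    using hadamard_blocks_mult_vec_nth[OF d Gv r] hadamard_blocks_mult_vec_nth[OF d v i(1)]
      hadamard_blocks_mult_vec_nth[OF d v i(2)]
    unfolding i_def by simp
  also have "\<dots> = (if odd r then v $ (2 * i + 1) else v $ (2 * i))"
    by (simp add: diff_conv_add_uminus[symmetric])
  also have "\<dots> = v $ r" unfolding i_def by (metis odd_two_times_div_two_succ even_two_times_div_two)
  finally show "(hadamard_blocks d *\<^sub>v (hadamard_blocks d *\<^sub>v v)) $ r = v $ r" .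
qed (use v in \<open>simp add: hadamard_blocks_def\<close>)

lemma unitary_hadamard_blocks: "even d \<Longrightarrow> unitary_mat d (hadamard_blocks d)"
  by (rule unitary_mat_if_hermitian_involution[OF hadamard_blocks_carrier _ hadamard_blocks_involution])
    (auto simp: hadamard_blocks_def)

definition involution_on :: "(nat \<Rightarrow> nat) \<Rightarrow> nat \<Rightarrow> bool" where
  "involution_on \<sigma> d \<longleftrightarrow> (\<forall>c<d. \<sigma> c < d \<and> \<sigma> (\<sigma> c) = c)"

lemma involution_on_eq_iff:
  assumes "involution_on \<sigma> d" "i < d" "j < d"
  shows "i = \<sigma> j \<longleftrightarrow> j = \<sigma> i"
  using assms unfolding involution_on_def by metis

definition perm_mat :: "(nat \<Rightarrow> nat) \<Rightarrow> nat \<Rightarrow> complex mat" where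
  "perm_mat \<sigma> d = mat d d (\<lambda>(r, c). if r = \<sigma> c then 1 else 0)"

lemma perm_mat_carrier [simp]: "perm_mat \<sigma> d \<in> carrier_mat d d"
  unfolding perm_mat_def by simp

lemma perm_mat_mult_vec_carrier [simp]: "perm_mat \<sigma> d *\<^sub>v v \<in> carrier_vec d"
  by (intro carrier_vecI) (simp add: perm_mat_def)

lemma perm_mat_mult_vec_nth:
  assumes s: "involution_on \<sigma> d" and v: "v \<in> carrier_vec d" and r: "r < d"
  shows "(perm_mat \<sigma> d *\<^sub>v v) $ r = v $ \<sigma> r"
proof -
  have "(perm_mat \<sigma> d *\<^sub>v v) $ r = (\<Sum>c<d. (if r = \<sigma> c then 1 else 0) * v $ c)"
    unfolding perm_mat_def using mat_mult_vec_nth[OF v r] by simp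
  also have "\<dots> = (\<Sum>c<d. if c = \<sigma> r then v $ c else 0)"
    using involution_on_eq_iff[OF s r] by (intro sum.cong) auto
  also have "\<dots> = v $ \<sigma> r"
    using s r unfolding involution_on_def by simp
  finally show ?thesis .
qed

lemma unitary_perm_mat:
  assumes s: "involution_on \<sigma> d"
  shows "unitary_mat d (perm_mat \<sigma> d)"
proof (rule unitary_mat_if_hermitian_involution)
  fix i j assume "i < d" "j < d"
  then show "cnj (perm_mat \<sigma> d $$ (j, i)) = perm_mat \<sigma> d $$ (i, j)"
    unfolding perm_mat_def using involution_on_eq_iff[OF s] by simp
next
  fix v :: "complex vec" assume v: "v \<in> carrier_vec d"
  show "perm_mat \<sigma> d *\<^sub>v (perm_mat \<sigma> d *\<^sub>v v) = v"
  proof (rule eq_vecI)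
    fix r assume "r < dim_vec v"
    then have r: "r < d" and "\<sigma> r < d" "\<sigma> (\<sigma> r) = r"
      using s v unfolding involution_on_def by auto
    then show "(perm_mat \<sigma> d *\<^sub>v (perm_mat \<sigma> d *\<^sub>v v)) $ r = v $ r"
      by (simp add: perm_mat_mult_vec_nth[OF s] v)
  qed (use v in \<open>simp add: perm_mat_def\<close>)
qed simp

definition hadamard_on :: "nat \<Rightarrow> nat \<Rightarrow> nat \<Rightarrow> complex mat" where
  "hadamard_on a b d = mat d d (\<lambda>(r, c).
     if r = a then (if c = a \<or> c = b then inv_sqrt2 else 0)
     else if r = b then (if c = a then inv_sqrt2 else if c = b then - inv_sqrt2 else 0)
     else if r = c then 1 else 0)"

lemma hadamard_on_carrier [simp]: "hadamard_on a b d \<in> carrier_mat d d"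
  unfolding hadamard_on_def by simp

lemma hadamard_on_mult_vec_carrier [simp]: "hadamard_on a b d *\<^sub>v v \<in> carrier_vec d"
  by (intro carrier_vecI) (simp add: hadamard_on_def)

lemma hadamard_on_mult_vec_nth:
  assumes ab: "a < d" "b < d" "a \<noteq> b" and v: "v \<in> carrier_vec d" and r: "r < d"
  shows "(hadamard_on a b d *\<^sub>v v) $ r =
    (if r = a then inv_sqrt2 * v $ a + inv_sqrt2 * v $ b
     else if r = b then inv_sqrt2 * v $ a - inv_sqrt2 * v $ b else v $ r)"
proof -
  let ?g = "\<lambda>(r, c). if r = a then (if c = a \<or> c = b then inv_sqrt2 else 0)
     else if r = b then (if c = a then inv_sqrt2 else if c = b then - inv_sqrt2 else 0)
     else if r = c then 1 else (0 :: complex)"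
  have e: "(hadamard_on a b d *\<^sub>v v) $ r = (\<Sum>c<d. ?g (r, c) * v $ c)"
    unfolding hadamard_on_def by (rule mat_mult_vec_nth[OF v r])
  show ?thesis
  proof (cases "r = a \<or> r = b")
    case True
    have "(\<Sum>c<d. ?g (r, c) * v $ c) = ?g (r, a) * v $ a + ?g (r, b) * v $ b"
      by (rule sum_lessThan_eq_pair[OF ab]) (use True in auto)
    then show ?thesis unfolding e using True ab(3) by auto
  next
    case False
    have "(\<Sum>c<d. ?g (r, c) * v $ c) = ?g (r, r) * v $ r"
      by (rule sum_lessThan_eq_single[OF r]) (use False in auto)
    then show ?thesis unfolding e using False by auto
  qed
qed

lemma unitary_hadamard_on:
  assumes ab: "a < d" "b < d" "a \<noteq> b"
  shows "unitary_mat d (hadamard_on a b d)"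
proof (rule unitary_mat_if_hermitian_involution)
  fix v :: "complex vec" assume v: "v \<in> carrier_vec d"
  have Hv: "hadamard_on a b d *\<^sub>v v \<in> carrier_vec d" by simp
  show "hadamard_on a b d *\<^sub>v (hadamard_on a b d *\<^sub>v v) = v"
  proof (rule eq_vecI)
    fix r assume "r < dim_vec v"
    then have r: "r < d" using v by simp
    have "(hadamard_on a b d *\<^sub>v v) $ a = inv_sqrt2 * v $ a + inv_sqrt2 * v $ b"
      "(hadamard_on a b d *\<^sub>v v) $ b = inv_sqrt2 * v $ a - inv_sqrt2 * v $ b"
      using hadamard_on_mult_vec_nth[OF ab v ab(1)] hadamard_on_mult_vec_nth[OF ab v ab(2)] ab(3)
      by simp_all
    then show "(hadamard_on a b d *\<^sub>v (hadamard_on a b d *\<^sub>v v)) $ r = v $ r"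
      unfolding hadamard_on_mult_vec_nth[OF ab Hv r] using hadamard_on_mult_vec_nth[OF ab v r] by simp
  qed (use v in \<open>simp add: hadamard_on_def\<close>)
qed (auto simp: hadamard_on_def)

section \<open>The query operator and the polynomial method\<close>

lemma index_components:
  fixes W :: nat
  assumes "W > 0" "b < 2" "z < W"
  shows "(i * (2 * W) + b * W + z) div (2 * W) = i"
    and "(i * (2 * W) + b * W + z) mod (2 * W) div W = b"
    and "(i * (2 * W) + b * W + z) mod W = z"
proof -
  have "b * W \<le> W" using assms(2) by (cases "b = 0") auto
  then have "b * W + z < 2 * W" using assms(3) by linarith
  then show "(i * (2 * W) + b * W + z) div (2 * W) = i"
    and "(i * (2 * W) + b * W + z) mod (2 * W) div W = b"
    using assms by (simp_all add: add.assoc)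
  have "i * (2 * W) + b * W + z = (i * 2 + b) * W + z" by (simp add: algebra_simps)
  then show "(i * (2 * W) + b * W + z) mod W = z" using assms by simp
qed

lemma index_decompose:
  fixes W :: nat
  assumes "W > 0"
  shows "c = c div (2 * W) * (2 * W) + c mod (2 * W) div W * W + c mod W"
    and "c mod (2 * W) div W < 2"
proof -
  have "c mod (2 * W) = c mod (2 * W) div W * W + c mod (2 * W) mod W" by simp
  also have "c mod (2 * W) mod W = c mod W" by (simp add: mod_mod_cancel)
  finally have "c mod (2 * W) = c mod (2 * W) div W * W + c mod W" .
  then show "c = c div (2 * W) * (2 * W) + c mod (2 * W) div W * W + c mod W"
    by (metis add.assoc div_mult_mod_eq)
  show "c mod (2 * W) div W < 2"
    using assms by (simp add: div_less_iff_less_mult)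
qed

definition flip_query_bit :: "nat \<Rightarrow> nat \<Rightarrow> nat" where
  "flip_query_bit W c = c div (2 * W) * (2 * W) + (1 - c mod (2 * W) div W) * W + c mod W"

lemma flip_query_bit_components:
  assumes "W > 0"
  shows "flip_query_bit W c div (2 * W) = c div (2 * W)"
    and "flip_query_bit W (flip_query_bit W c) = c"
proof -
  note dec = index_decompose[OF assms, of c]
  note comp = index_components[OF assms, of "1 - c mod (2 * W) div W" "c mod W" "c div (2 * W)"]
  show "flip_query_bit W c div (2 * W) = c div (2 * W)"
    unfolding flip_query_bit_def using comp assms by simp
  have "flip_query_bit W (flip_query_bit W c)
      = c div (2 * W) * (2 * W) + (1 - (1 - c mod (2 * W) div W)) * W + c mod W"
    unfolding flip_query_bit_def[of W "flip_query_bit W c"]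
    using comp assms by (simp add: flip_query_bit_def)
  also have "\<dots> = c" using dec by simp
  finally show "flip_query_bit W (flip_query_bit W c) = c" .
qed

lemma flip_query_bit_less:
  assumes "W > 0" "c < n * (2 * W)"
  shows "flip_query_bit W c < n * (2 * W)"
  using flip_query_bit_components(1)[OF assms(1), of c] assms
  by (metis div_less_iff_less_mult mult_pos_pos zero_less_numeral)

lemma qry_perm_eq:
  "W > 0 \<Longrightarrow> qry_perm W x c = (if x ! (c div (2 * W)) then flip_query_bit W c else c)"
  unfolding qry_perm_def flip_query_bit_def Let_def using index_decompose(1)[of W c] by auto

lemma qry_perm_less_and_involutive:
  assumes "W > 0" "c < n * (2 * W)"
  shows "qry_perm W x c < n * (2 * W) \<and> qry_perm W x (qry_perm W x c) = c"
  using assms flip_query_bit_less[OF assms] flip_query_bit_components[OF assms(1)]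
  by (simp add: qry_perm_eq)

lemma query_op_carrier [simp]: "query_op n W x \<in> carrier_mat (qdim n W) (qdim n W)"
  unfolding query_op_def by simp

lemma query_op_mult_vec_carrier [simp]:
  "v \<in> carrier_vec (qdim n W) \<Longrightarrow> query_op n W x *\<^sub>v v \<in> carrier_vec (qdim n W)"
  by (rule mult_mat_vec_carrier[OF query_op_carrier])

lemma query_op_mult_vec_nth:
  assumes "W > 0" "r < qdim n W" "v \<in> carrier_vec (qdim n W)"
  shows "(query_op n W x *\<^sub>v v) $ r = v $ qry_perm W x r"
proof -
  have perm: "r = qry_perm W x c \<longleftrightarrow> c = qry_perm W x r" if "c < qdim n W" for c
    using qry_perm_less_and_involutive[OF assms(1)] that assms(2) unfolding qdim_def by metis
  have "(query_op n W x *\<^sub>v v) $ r = (\<Sum>c<qdim n W. (if r = qry_perm W x c then 1 else 0) * v $ c)"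
    unfolding query_op_def using mat_mult_vec_nth[OF assms(3,2)] by simp
  also have "\<dots> = (\<Sum>c<qdim n W. if c = qry_perm W x r then v $ c else 0)"
    by (rule sum.cong) (simp_all add: perm)
  also have "\<dots> = v $ qry_perm W x r"
    using qry_perm_less_and_involutive[OF assms(1)] assms(2) unfolding qdim_def by simp
  finally show ?thesis .
qed

text \<open>After a query each amplitude is either the old amplitude at the same index or the one at the
  bit-flipped index, depending on a single input bit.\<close>

lemma amplitude_poly_deg_le_after_query:
  assumes "W > 0" "U \<in> carrier_mat (qdim n W) (qdim n W)"
    and V: "\<And>x. V x \<in> carrier_vec (qdim n W)"
    and deg: "\<And>j. j < qdim n W \<Longrightarrow> poly_deg_le k (\<lambda>x. V x $ j)"
    and "j < qdim n W"
  shows "poly_deg_le (Suc k) (\<lambda>x. (U *\<^sub>v (query_op n W x *\<^sub>v V x)) $ j)"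
proof -
  let ?d = "qdim n W"
  have "(U *\<^sub>v (query_op n W x *\<^sub>v V x)) $ j = (\<Sum>c<?d. U $$ (j, c) * (query_op n W x *\<^sub>v V x) $ c)"
    for x
    using assms(2,5) V by (intro mult_mat_vec_nth_sum) auto
  also have "(\<Sum>c<?d. U $$ (j, c) * (query_op n W x *\<^sub>v V x) $ c)
      = (\<Sum>c<?d. U $$ (j, c) * (if x ! (c div (2 * W)) then V x $ flip_query_bit W c else V x $ c))"
    for x
    using assms(1) V by (intro sum.cong) (simp_all add: query_op_mult_vec_nth qry_perm_eq)
  finally have "(U *\<^sub>v (query_op n W x *\<^sub>v V x)) $ j
      = (\<Sum>c<?d. U $$ (j, c) * (if x ! (c div (2 * W)) then V x $ flip_query_bit W c else V x $ c))"
    for x .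
  moreover have "poly_deg_le (Suc k)
      (\<lambda>x. \<Sum>c<?d. U $$ (j, c) * (if x ! (c div (2 * W)) then V x $ flip_query_bit W c else V x $ c))"
    using deg flip_query_bit_less[OF assms(1)]
    by (intro poly_deg_le_sum poly_deg_le_scale poly_deg_le_if_nth) (auto simp: qdim_def)
  ultimately show ?thesis by simp
qed

lemma q_run_poly_deg_le:
  assumes "W > 0" "\<forall>U\<in>set Us. U \<in> carrier_mat (qdim n W) (qdim n W)"
    and "\<And>x. V x \<in> carrier_vec (qdim n W)"
    and "\<And>j. j < qdim n W \<Longrightarrow> poly_deg_le k (\<lambda>x. V x $ j)"
  shows "(\<forall>x. q_run (query_op n W x) Us (V x) \<in> carrier_vec (qdim n W)) \<and>
         (\<forall>j < qdim n W. poly_deg_le (k + length Us) (\<lambda>x. q_run (query_op n W x) Us (V x) $ j))"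
  using assms(2-)
proof (induction Us arbitrary: V k)
  case (Cons U Us)
  have U: "U \<in> carrier_mat (qdim n W) (qdim n W)" using Cons.prems by simp
  have UV: "U *\<^sub>v (query_op n W x *\<^sub>v V x) \<in> carrier_vec (qdim n W)" for x
    using U Cons.prems(2) by (simp add: mult_mat_vec_carrier)
  have "(\<forall>x. q_run (query_op n W x) Us (U *\<^sub>v (query_op n W x *\<^sub>v V x)) \<in> carrier_vec (qdim n W)) \<and>
      (\<forall>j < qdim n W. poly_deg_le (Suc k + length Us)
        (\<lambda>x. q_run (query_op n W x) Us (U *\<^sub>v (query_op n W x *\<^sub>v V x)) $ j))"
    using Cons.prems UV amplitude_poly_deg_le_after_query[OF assms(1) U Cons.prems(2,3)]
    by (intro Cons.IH) auto
  then show ?case by simp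
qed simp

lemma q_final_poly_deg_le:
  assumes "quantum_alg n T W U0 Us" "j < qdim n W"
  shows "poly_deg_le T (\<lambda>x. q_final n W U0 Us x $ j)"
proof -
  have W: "W > 0" and U0: "U0 \<in> carrier_mat (qdim n W) (qdim n W)"
    and Us: "\<forall>U\<in>set Us. U \<in> carrier_mat (qdim n W) (qdim n W)" and "length Us = T"
    using assms(1) unfolding quantum_alg_def unitary_mat_def by auto
  have "poly_deg_le (0 + length Us) (\<lambda>x. q_run (query_op n W x) Us (U0 *\<^sub>v unit_vec (qdim n W) 0) $ j)"
    using q_run_poly_deg_le[OF W Us, where V = "\<lambda>x. U0 *\<^sub>v unit_vec (qdim n W) 0" and k = 0] U0 assms(2)
    by (auto intro: poly_deg_le_const)
  then show ?thesis unfolding q_final_def \<open>length Us = T\<close> by simp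
qed

lemma q_prob1_poly_deg_le:
  assumes "quantum_alg n T W U0 Us"
  shows "poly_deg_le (T + T) (\<lambda>x. complex_of_real (q_prob1 n W U0 Us Acc x))"
proof -
  have e: "complex_of_real (q_prob1 n W U0 Us Acc x) =
     (\<Sum>j\<in>Acc \<inter> {..<qdim n W}. q_final n W U0 Us x $ j * cnj (q_final n W U0 Us x $ j))" for x
    unfolding q_prob1_def of_real_sum by (rule sum.cong) (rule refl, rule complex_norm_square)
  show ?thesis unfolding e
    by (intro poly_deg_le_sum poly_deg_le_mult poly_deg_le_cnj q_final_poly_deg_le[OF assms]) auto
qed

lemma quantum_parity_lower_bound:
  assumes alg: "quantum_alg n T W U0 Us"
    and succ: "\<forall>x\<in>inputs n. quantum_succ n W U0 Us Acc parity x > 1/2"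
  shows "n \<le> T + T"
proof (rule ccontr)
  assume "\<not> n \<le> T + T"
  let ?p = "q_prob1 n W U0 Us Acc"
  define t where "t x = (if odd (weight x) then -1 else 1) * (?p x - 1/2)" for x
  have "poly_deg_le (T + T) (\<lambda>x. complex_of_real (?p x) + (- 1/2))"
    by (intro poly_deg_le.add q_prob1_poly_deg_le[OF alg] poly_deg_le_const)
  then have "(\<Sum>x\<in>inputs n. (-1) ^ weight x * (complex_of_real (?p x) + (- 1/2))) = 0"
    using \<open>\<not> n \<le> T + T\<close> by (intro sum_parity_sign_poly_eq_0) auto
  moreover have "(\<Sum>x\<in>inputs n. (-1) ^ weight x * (complex_of_real (?p x) + (- 1/2)))
      = complex_of_real (\<Sum>x\<in>inputs n. t x)"
    unfolding of_real_sum by (rule sum.cong) (auto simp: t_def)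
  ultimately have "complex_of_real (\<Sum>x\<in>inputs n. t x) = 0" by simp
  then have "(\<Sum>x\<in>inputs n. t x) = 0" by (simp only: of_real_eq_0_iff)
  moreover have "t x < 0" if "x \<in> inputs n" for x
    using succ that unfolding t_def quantum_succ_def parity_eq_odd_weight by auto
  then have "(\<Sum>x\<in>inputs n. t x) < (\<Sum>x\<in>inputs n. 0)"
    using inputs_nonempty by (intro sum_strict_mono) auto
  ultimately show False by simp
qed

section \<open>A quantum algorithm with \<open>\<lceil>n/2\<rceil>\<close> queries\<close>

text \<open>Keep the workspace size \<open>1\<close> in \<open>qdim n 1\<close> and \<open>query_op n 1 x\<close> from being rewritten to
  \<open>Suc 0\<close>, so that the lemmas below apply as stated.\<close>

declare One_nat_def [simp del]

definition npairs :: "nat \<Rightarrow> nat" where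
  "npairs n = (n + 1) div 2"

definition pad :: "nat \<Rightarrow> nat" where
  "pad n = 2 * npairs n - n"

text \<open>Slot \<open>s < 2 * npairs n\<close> holds the dummy bit (basis state \<open>|0,0\<rangle>\<close>, never phased) if
  \<open>s < pad n\<close>, and bit \<open>s - pad n\<close> (basis state \<open>|s - pad n, 1\<rangle>\<close>) otherwise.\<close>

definition slot :: "nat \<Rightarrow> nat \<Rightarrow> nat" where
  "slot n s = (if s < pad n then 0 else 2 * (s - pad n) + 1)"

definition pair_fst :: "nat \<Rightarrow> nat \<Rightarrow> nat" where
  "pair_fst n k = slot n (2 * k)"

definition pair_snd :: "nat \<Rightarrow> nat \<Rightarrow> nat" where
  "pair_snd n k = slot n (2 * k + 1)"

definition slot_bit :: "nat \<Rightarrow> bool list \<Rightarrow> nat \<Rightarrow> bool" where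
  "slot_bit n x s \<longleftrightarrow> pad n \<le> s \<and> x ! (s - pad n)"

definition slot_sign :: "nat \<Rightarrow> bool list \<Rightarrow> nat \<Rightarrow> complex" where
  "slot_sign n x s = (if slot_bit n x s then -1 else 1)"

definition prefix_weight :: "nat \<Rightarrow> bool list \<Rightarrow> nat \<Rightarrow> nat" where
  "prefix_weight n x k = weight (take (2 * k - pad n) x)"

lemma pad_le_one: "pad n \<le> 1"
  unfolding pad_def npairs_def by linarith

lemma two_npairs_eq: "2 * npairs n = n + pad n"
  unfolding pad_def npairs_def by linarith

lemma npairs_pos: "n \<ge> 1 \<Longrightarrow> npairs n \<ge> 1"
  unfolding npairs_def by linarith

lemma slot_less: "s < 2 * npairs n \<Longrightarrow> n \<ge> 1 \<Longrightarrow> slot n s < qdim n 1"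
  unfolding slot_def qdim_def using two_npairs_eq[of n] pad_le_one[of n] by auto

lemma slot_inj: "s < 2 * npairs n \<Longrightarrow> s' < 2 * npairs n \<Longrightarrow> s \<noteq> s' \<Longrightarrow> slot n s \<noteq> slot n s'"
  unfolding slot_def using pad_le_one[of n] by auto

lemma pair_less:
  assumes "k < npairs n"
  shows "pair_fst n k < qdim n 1" "pair_snd n k < qdim n 1" "pair_fst n k \<noteq> pair_snd n k"
  using assms slot_less[of _ n] slot_inj[of _ n] npairs_def
  unfolding pair_fst_def pair_snd_def by auto

lemma odd_slot_and_nth_iff: "(odd (slot n s) \<and> x ! (slot n s div 2)) \<longleftrightarrow> slot_bit n x s"
  unfolding slot_def slot_bit_def by auto

lemma slot_sign_sq: "slot_sign n x s * slot_sign n x s = 1"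
  unfolding slot_sign_def by simp

lemma slot_sign_mult_self [simp]: "slot_sign n x s * (slot_sign n x s * z) = z"
  unfolding slot_sign_def by simp

lemma weight_take_Suc_slot:
  assumes "s < 2 * npairs n" "length x = n"
  shows "weight (take (Suc s - pad n) x) = weight (take (s - pad n) x) + (if slot_bit n x s then 1 else 0)"
proof (cases "s < pad n")
  case True
  then show ?thesis using pad_le_one[of n] by (auto simp: slot_bit_def)
next
  case False
  then have "s - pad n < length x" using assms two_npairs_eq[of n] by linarith
  with False show ?thesis
    by (simp add: Suc_diff_le take_Suc_conv_app_nth weight_append slot_bit_def)
      (simp add: weight_def)
qed

lemma prefix_weight_Suc:
  assumes "k < npairs n" "length x = n"
  shows "prefix_weight n x (Suc k) = prefix_weight n x k
    + (if slot_bit n x (2 * k) then 1 else 0) + (if slot_bit n x (2 * k + 1) then 1 else 0)"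
  using weight_take_Suc_slot[of "2 * k" n x] weight_take_Suc_slot[of "2 * k + 1" n x] assms
  unfolding prefix_weight_def by (simp add: One_nat_def)

lemma prefix_weight_0: "prefix_weight n x 0 = 0"
  unfolding prefix_weight_def weight_def by simp

lemma prefix_weight_npairs: "length x = n \<Longrightarrow> prefix_weight n x (npairs n) = weight x"
  unfolding prefix_weight_def using two_npairs_eq[of n] by simp

lemma sign_prefix_weight_Suc:
  assumes "k < npairs n" "length x = n"
  shows "(-1 :: complex) ^ prefix_weight n x (Suc k)
    = (-1) ^ prefix_weight n x k * slot_sign n x (2 * k) * slot_sign n x (2 * k + 1)"
  unfolding prefix_weight_Suc[OF assms] power_add slot_sign_def by simp

definition phase_query :: "nat \<Rightarrow> bool list \<Rightarrow> complex vec \<Rightarrow> complex vec" where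
  "phase_query n x w =
     hadamard_blocks (qdim n 1) *\<^sub>v (query_op n 1 x *\<^sub>v (hadamard_blocks (qdim n 1) *\<^sub>v w))"

lemma phase_query_carrier [simp]: "phase_query n x w \<in> carrier_vec (qdim n 1)"
  unfolding phase_query_def by simp

lemma even_qdim: "even (qdim n 1)"
  unfolding qdim_def by simp

lemma qry_perm_one: "qry_perm 1 x c = (if x ! (c div 2) then (if even c then c + 1 else c - 1) else c)"
proof -
  have "c div 2 * 2 + (1 - c mod 2) = (if even c then c + 1 else c - 1)" by presburger
  then show ?thesis unfolding qry_perm_def Let_def by auto
qed

lemma phase_query_nth:
  assumes w: "w \<in> carrier_vec (qdim n 1)" and r: "r < qdim n 1"
  shows "phase_query n x w $ r = (if odd r \<and> x ! (r div 2) then - w $ r else w $ r)"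
proof -
  let ?d = "qdim n 1" and ?G = "hadamard_blocks (qdim n 1)"
  define i where "i = r div 2"
  have i: "2 * i < ?d" "2 * i + 1 < ?d"
    using r even_qdim[of n] unfolding i_def by presburger+
  let ?u = "?G *\<^sub>v w"
  let ?q = "query_op n 1 x *\<^sub>v ?u"
  have u: "?u $ (2 * i) = inv_sqrt2 * w $ (2 * i) + inv_sqrt2 * w $ (2 * i + 1)"
    "?u $ (2 * i + 1) = inv_sqrt2 * w $ (2 * i) - inv_sqrt2 * w $ (2 * i + 1)"
    using hadamard_blocks_mult_vec_nth[OF even_qdim w i(1)] hadamard_blocks_mult_vec_nth[OF even_qdim w i(2)]
    by simp_all
  have q: "?q $ (2 * i) = (if x ! i then ?u $ (2 * i + 1) else ?u $ (2 * i))"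
    "?q $ (2 * i + 1) = (if x ! i then ?u $ (2 * i) else ?u $ (2 * i + 1))"
    using query_op_mult_vec_nth[of 1 _ n ?u x] i by (simp_all add: qry_perm_one)
  have res: "phase_query n x w $ r
      = inv_sqrt2 * ?q $ (2 * i) + (if odd r then - inv_sqrt2 else inv_sqrt2) * ?q $ (2 * i + 1)"
    unfolding phase_query_def
    using hadamard_blocks_mult_vec_nth[OF even_qdim _ r, of ?q] unfolding i_def by simp
  show ?thesis
  proof (cases "odd r")
    case True
    then have "r = 2 * i + 1" unfolding i_def by presburger
    with True show ?thesis unfolding res q u by (cases "x ! i") simp_all
  next
    case False
    then have "r = 2 * i" unfolding i_def by presburger
    with False show ?thesis unfolding res q u by (cases "x ! i") simp_all
  qed
qed

definition pair_state :: "nat \<Rightarrow> nat \<Rightarrow> complex \<Rightarrow> nat \<Rightarrow> complex vec" where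
  "pair_state n k \<sigma> c = vec (qdim n 1) (\<lambda>r.
     if r = pair_fst n k then \<sigma> * inv_sqrt2
     else if r = pair_snd n k then \<sigma> * (-1) ^ c * inv_sqrt2 else 0)"

lemma pair_state_carrier [simp]: "pair_state n k \<sigma> c \<in> carrier_vec (qdim n 1)"
  unfolding pair_state_def by simp

lemma phase_query_pair_state_nth:
  assumes k: "k < npairs n" and r: "r < qdim n 1"
  shows "phase_query n x (pair_state n k \<sigma> c) $ r =
    (if r = pair_fst n k then \<sigma> * slot_sign n x (2 * k) * inv_sqrt2
     else if r = pair_snd n k then \<sigma> * (-1) ^ c * slot_sign n x (2 * k + 1) * inv_sqrt2 else 0)"
  using pair_less[OF k] odd_slot_and_nth_iff[of n "2 * k" x] odd_slot_and_nth_iff[of n "2 * k + 1" x] r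
  unfolding phase_query_nth[OF pair_state_carrier r]
  by (auto simp: pair_state_def slot_sign_def pair_fst_def pair_snd_def)

definition pair_shift :: "nat \<Rightarrow> nat \<Rightarrow> nat \<Rightarrow> nat" where
  "pair_shift n k r =
    (if r = pair_fst n k then pair_fst n (Suc k) else if r = pair_fst n (Suc k) then pair_fst n k
     else if r = pair_snd n k then pair_snd n (Suc k) else if r = pair_snd n (Suc k) then pair_snd n k
     else r)"

lemma consecutive_pairs_distinct:
  assumes "Suc k < npairs n"
  shows "pair_fst n k \<noteq> pair_snd n k" "pair_fst n k \<noteq> pair_fst n (Suc k)"
    "pair_fst n k \<noteq> pair_snd n (Suc k)" "pair_snd n k \<noteq> pair_fst n (Suc k)"
    "pair_snd n k \<noteq> pair_snd n (Suc k)" "pair_fst n (Suc k) \<noteq> pair_snd n (Suc k)"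
  unfolding pair_fst_def pair_snd_def by (rule slot_inj, use assms in simp_all)+

lemma involution_on_pair_shift:
  "Suc k < npairs n \<Longrightarrow> involution_on (pair_shift n k) (qdim n 1)"
  unfolding involution_on_def pair_shift_def
  using consecutive_pairs_distinct[of k n] pair_less[of k n] pair_less[of "Suc k" n] by auto

lemma pair_shift_phase_query_pair_state:
  assumes k: "Suc k < npairs n" and x: "length x = n"
  shows "perm_mat (pair_shift n k) (qdim n 1) *\<^sub>v phase_query n x (pair_state n k \<sigma> (prefix_weight n x k))
    = pair_state n (Suc k) (\<sigma> * slot_sign n x (2 * k)) (prefix_weight n x (Suc k))"
proof (rule eq_vecI)
  fix r assume "r < dim_vec (pair_state n (Suc k) (\<sigma> * slot_sign n x (2 * k)) (prefix_weight n x (Suc k)))"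
  then have r: "r < qdim n 1" by (simp add: pair_state_def)
  have k0: "k < npairs n" using k by simp
  have inv: "involution_on (pair_shift n k) (qdim n 1)" by (rule involution_on_pair_shift[OF k])
  then have "pair_shift n k r < qdim n 1" using r unfolding involution_on_def by auto
  moreover have "\<sigma> * (-1) ^ prefix_weight n x k * slot_sign n x (2 * k + 1)
      = \<sigma> * slot_sign n x (2 * k) * (-1) ^ prefix_weight n x (Suc k)"
    unfolding sign_prefix_weight_Suc[OF k0 x] by (simp add: algebra_simps)
  ultimately show "(perm_mat (pair_shift n k) (qdim n 1) *\<^sub>v
        phase_query n x (pair_state n k \<sigma> (prefix_weight n x k))) $ r
      = pair_state n (Suc k) (\<sigma> * slot_sign n x (2 * k)) (prefix_weight n x (Suc k)) $ r"
    unfolding perm_mat_mult_vec_nth[OF inv phase_query_carrier r]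
    using phase_query_pair_state_nth[of k n] k r consecutive_pairs_distinct[OF k]
    by (auto simp: pair_state_def pair_shift_def)
qed (simp add: perm_mat_def pair_state_def)

definition swap_to_first_pair :: "nat \<Rightarrow> nat \<Rightarrow> nat" where
  "swap_to_first_pair n r = (if r = 0 then pair_fst n 0 else if r = pair_fst n 0 then 0 else r)"

definition parity_init :: "nat \<Rightarrow> complex mat" where
  "parity_init n = hadamard_blocks (qdim n 1) *
     (hadamard_on (pair_fst n 0) (pair_snd n 0) (qdim n 1) * perm_mat (swap_to_first_pair n) (qdim n 1))"

definition parity_step :: "nat \<Rightarrow> nat \<Rightarrow> complex mat" where
  "parity_step n k = hadamard_blocks (qdim n 1) *
     (perm_mat (pair_shift n k) (qdim n 1) * hadamard_blocks (qdim n 1))"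

definition parity_final :: "nat \<Rightarrow> complex mat" where
  "parity_final n = hadamard_on (pair_fst n (npairs n - 1)) (pair_snd n (npairs n - 1)) (qdim n 1) *
     hadamard_blocks (qdim n 1)"

definition parity_unitaries :: "nat \<Rightarrow> complex mat list" where
  "parity_unitaries n = map (parity_step n) [0..<npairs n - 1] @ [parity_final n]"

lemma involution_on_swap_to_first_pair:
  "n \<ge> 1 \<Longrightarrow> involution_on (swap_to_first_pair n) (qdim n 1)"
  unfolding involution_on_def swap_to_first_pair_def
  using pair_less(1)[of 0 n] npairs_pos[of n] by (auto simp: qdim_def)

lemma parity_init_start:
  assumes n: "n \<ge> 1"
  shows "parity_init n *\<^sub>v unit_vec (qdim n 1) 0 = hadamard_blocks (qdim n 1) *\<^sub>v pair_state n 0 1 0"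
proof -
  let ?d = "qdim n 1"
  have "0 < npairs n" using npairs_pos[OF n] by simp
  note pair = pair_less[OF this]
  have d: "0 < ?d" using n by (simp add: qdim_def)
  have P: "perm_mat (swap_to_first_pair n) ?d *\<^sub>v unit_vec ?d 0 = unit_vec ?d (pair_fst n 0)"
  proof (rule eq_vecI)
    fix r assume "r < dim_vec (unit_vec ?d (pair_fst n 0))"
    then have r: "r < ?d" by simp
    have "swap_to_first_pair n r < ?d"
      using involution_on_swap_to_first_pair[OF n] r unfolding involution_on_def by auto
    then show "(perm_mat (swap_to_first_pair n) ?d *\<^sub>v unit_vec ?d 0) $ r = unit_vec ?d (pair_fst n 0) $ r"
      unfolding perm_mat_mult_vec_nth[OF involution_on_swap_to_first_pair[OF n] unit_vec_carrier r]
      using r pair d by (auto simp: swap_to_first_pair_def)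
  qed (simp add: perm_mat_def)
  have H: "hadamard_on (pair_fst n 0) (pair_snd n 0) ?d *\<^sub>v unit_vec ?d (pair_fst n 0) = pair_state n 0 1 0"
  proof (rule eq_vecI)
    fix r assume "r < dim_vec (pair_state n 0 1 0)"
    then have r: "r < ?d" by (simp add: pair_state_def)
    show "(hadamard_on (pair_fst n 0) (pair_snd n 0) ?d *\<^sub>v unit_vec ?d (pair_fst n 0)) $ r = pair_state n 0 1 0 $ r"
      unfolding hadamard_on_mult_vec_nth[OF pair(1-3) unit_vec_carrier r]
      using r pair by (auto simp: pair_state_def)
  qed (simp add: hadamard_on_def pair_state_def)
  show ?thesis
    unfolding parity_init_def P[symmetric] H[symmetric]
    using assoc_mult_mat_vec[OF hadamard_blocks_carrier
        mult_carrier_mat[OF hadamard_on_carrier perm_mat_carrier] unit_vec_carrier]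
      assoc_mult_mat_vec[OF hadamard_on_carrier perm_mat_carrier unit_vec_carrier]
    by simp
qed

lemma parity_step_mult_vec:
  assumes "y \<in> carrier_vec (qdim n 1)"
  shows "parity_step n k *\<^sub>v y = hadamard_blocks (qdim n 1) *\<^sub>v
    (perm_mat (pair_shift n k) (qdim n 1) *\<^sub>v (hadamard_blocks (qdim n 1) *\<^sub>v y))"
  unfolding parity_step_def
  using assoc_mult_mat_vec[OF hadamard_blocks_carrier mult_carrier_mat[OF perm_mat_carrier hadamard_blocks_carrier] assms]
    assoc_mult_mat_vec[OF perm_mat_carrier hadamard_blocks_carrier assms]
  by simp

lemma parity_final_mult_vec:
  assumes "y \<in> carrier_vec (qdim n 1)"
  shows "parity_final n *\<^sub>v y = hadamard_on (pair_fst n (npairs n - 1)) (pair_snd n (npairs n - 1)) (qdim n 1)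
    *\<^sub>v (hadamard_blocks (qdim n 1) *\<^sub>v y)"
  unfolding parity_final_def by (rule assoc_mult_mat_vec[OF hadamard_on_carrier hadamard_blocks_carrier assms])

lemma q_run_parity_steps:
  assumes x: "length x = n"
  shows "k < npairs n \<Longrightarrow> \<sigma> = 1 \<or> \<sigma> = -1 \<Longrightarrow> \<exists>\<sigma>'. (\<sigma>' = 1 \<or> \<sigma>' = -1) \<and>
     q_run (query_op n 1 x) (map (parity_step n) [k..<npairs n - 1] @ [parity_final n])
       (hadamard_blocks (qdim n 1) *\<^sub>v pair_state n k \<sigma> (prefix_weight n x k))
     = hadamard_on (pair_fst n (npairs n - 1)) (pair_snd n (npairs n - 1)) (qdim n 1) *\<^sub>v
         phase_query n x (pair_state n (npairs n - 1) \<sigma>' (prefix_weight n x (npairs n - 1)))"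
proof (induction "npairs n - 1 - k" arbitrary: k \<sigma>)
  case 0
  then have "k = npairs n - 1" by simp
  with 0 show ?case
    by (auto simp: parity_final_mult_vec phase_query_def)
next
  case (Suc j)
  then have k: "Suc k < npairs n" by simp
  have "[k..<npairs n - 1] = k # [Suc k..<npairs n - 1]" using k by (simp add: upt_conv_Cons)
  then have "q_run (query_op n 1 x) (map (parity_step n) [k..<npairs n - 1] @ [parity_final n])
      (hadamard_blocks (qdim n 1) *\<^sub>v pair_state n k \<sigma> (prefix_weight n x k))
    = q_run (query_op n 1 x) (map (parity_step n) [Suc k..<npairs n - 1] @ [parity_final n])
      (hadamard_blocks (qdim n 1) *\<^sub>v pair_state n (Suc k) (\<sigma> * slot_sign n x (2 * k)) (prefix_weight n x (Suc k)))"
    by (simp add: parity_step_mult_vec phase_query_def[symmetric] pair_shift_phase_query_pair_state[OF k x])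
  moreover have "\<sigma> * slot_sign n x (2 * k) = 1 \<or> \<sigma> * slot_sign n x (2 * k) = -1"
    using Suc.prems(2) by (auto simp: slot_sign_def)
  ultimately show ?case
    using Suc.hyps(1)[of "Suc k" "\<sigma> * slot_sign n x (2 * k)"] Suc.hyps(2) k by auto
qed

text \<open>Before the last Hadamard transform the pair holds \<open>\<plusminus>s\<^sub>a(|a\<rangle> + (-1)^|x| s\<^sub>a |b\<rangle>)/\<surd>2\<close>
  with \<open>s\<^sub>a = \<plusminus>1\<close>, so the amplitude of \<open>|b\<rangle>\<close> afterwards is \<open>\<plusminus>(1 - (-1)^|x|)/2\<close>.\<close>

lemma final_amplitude_norm:
  assumes n: "n \<ge> 1" and x: "length x = n" and \<sigma>: "\<sigma> = 1 \<or> \<sigma> = -1"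
  defines "K \<equiv> npairs n - 1"
  shows "(cmod ((hadamard_on (pair_fst n K) (pair_snd n K) (qdim n 1) *\<^sub>v
            phase_query n x (pair_state n K \<sigma> (prefix_weight n x K))) $ pair_snd n K))\<^sup>2
         = (if odd (weight x) then 1 else 0)"
proof -
  have K: "K < npairs n" and SK: "Suc K = npairs n" unfolding K_def using npairs_pos[OF n] by auto
  note pair = pair_less[OF K]
  define sa where "sa = slot_sign n x (2 * K)"
  define sb where "sb = slot_sign n x (2 * K + 1)"
  define c where "c = prefix_weight n x K"
  define E where "E = (-1 :: complex) ^ weight x"
  have "E = (-1) ^ c * sa * sb"
    unfolding E_def c_def sa_def sb_def
    using sign_prefix_weight_Suc[OF K x] unfolding SK prefix_weight_npairs[OF x] .
  then have sign_b: "(-1) ^ c * sb = sa * E"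
    using slot_sign_sq[of n x "2 * K"] unfolding sa_def by (simp add: algebra_simps)
  have "(hadamard_on (pair_fst n K) (pair_snd n K) (qdim n 1) *\<^sub>v phase_query n x (pair_state n K \<sigma> c)) $ pair_snd n K
      = inv_sqrt2 * (\<sigma> * sa * inv_sqrt2) - inv_sqrt2 * (\<sigma> * (-1) ^ c * sb * inv_sqrt2)"
    unfolding hadamard_on_mult_vec_nth[OF pair phase_query_carrier pair(2)]
      phase_query_pair_state_nth[OF K pair(1)] phase_query_pair_state_nth[OF K pair(2)]
    using pair(3) by (simp add: sa_def sb_def)
  also have "\<dots> = (inv_sqrt2 * inv_sqrt2) * (\<sigma> * sa - \<sigma> * ((-1) ^ c * sb))"
    by (simp add: algebra_simps)
  also have "\<dots> = \<sigma> * sa * ((1 - E) / 2)"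
    unfolding sign_b inv_sqrt2_sq by (simp add: field_simps)
  finally have amp: "(hadamard_on (pair_fst n K) (pair_snd n K) (qdim n 1) *\<^sub>v
      phase_query n x (pair_state n K \<sigma> c)) $ pair_snd n K = \<sigma> * sa * ((1 - E) / 2)" .
  have "cmod (\<sigma> * sa) = 1" using \<sigma> unfolding sa_def slot_sign_def by auto
  moreover have "cmod ((1 - E) / 2) = (if odd (weight x) then 1 else 0)" unfolding E_def by auto
  ultimately show ?thesis unfolding c_def[symmetric] amp by (simp add: norm_mult)
qed

lemma quantum_alg_parity: "n \<ge> 1 \<Longrightarrow> quantum_alg n (npairs n) 1 (parity_init n) (parity_unitaries n)"
  using npairs_pos[of n] pair_less[of 0 n] pair_less[of "npairs n - 1" n]
  unfolding quantum_alg_def parity_unitaries_def parity_init_def parity_step_def parity_final_def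
  by (auto intro!: unitary_mat_mult unitary_hadamard_blocks unitary_hadamard_on unitary_perm_mat
      involution_on_swap_to_first_pair involution_on_pair_shift simp: even_qdim)

lemma q_prob1_parity:
  assumes n: "n \<ge> 1" and x: "x \<in> inputs n"
  shows "q_prob1 n 1 (parity_init n) (parity_unitaries n) {pair_snd n (npairs n - 1)} x
    = (if parity x then 1 else 0)"
proof -
  have len: "length x = n" using x unfolding inputs_def by simp
  have k0: "0 < npairs n" using npairs_pos[OF n] by simp
  obtain \<sigma> where \<sigma>: "\<sigma> = 1 \<or> \<sigma> = -1" and run:
    "q_final n 1 (parity_init n) (parity_unitaries n) x
      = hadamard_on (pair_fst n (npairs n - 1)) (pair_snd n (npairs n - 1)) (qdim n 1) *\<^sub>v
         phase_query n x (pair_state n (npairs n - 1) \<sigma> (prefix_weight n x (npairs n - 1)))"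
    using q_run_parity_steps[OF len k0, of 1]
    unfolding q_final_def parity_init_start[OF n] parity_unitaries_def prefix_weight_0 by auto
  have "{pair_snd n (npairs n - 1)} \<inter> {..<qdim n 1} = {pair_snd n (npairs n - 1)}"
    using pair_less(2)[of "npairs n - 1" n] k0 by auto
  then show ?thesis
    unfolding q_prob1_def run using final_amplitude_norm[OF n len \<sigma>] parity_eq_odd_weight by simp
qed

lemma quantum_succ_parity:
  "n \<ge> 1 \<Longrightarrow> x \<in> inputs n \<Longrightarrow>
    quantum_succ n 1 (parity_init n) (parity_unitaries n) {pair_snd n (npairs n - 1)} parity x = 1"
  unfolding quantum_succ_def by (simp add: q_prob1_parity)

lemma npairs_eq_ceiling: "int (npairs n) = \<lceil>real n / 2\<rceil>"
proof -
  have "\<lceil>real n / 2\<rceil> = int ((n + 1) div 2)"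
    by (rule ceiling_unique) (cases "even n"; auto elim!: evenE oddE simp: field_simps)+
  then show ?thesis unfolding npairs_def by simp
qed

lemma UQ_parity:
  assumes n: "n \<ge> 1"
  shows "UQ n parity = npairs n"
  unfolding UQ_def
proof (rule Least_equality)
  show "\<exists>W U0 Us Acc. quantum_alg n (npairs n) W U0 Us \<and>
      (\<forall>x\<in>inputs n. 1/2 < quantum_succ n W U0 Us Acc parity x)"
    using quantum_alg_parity[OF n] quantum_succ_parity[OF n]
    by (intro exI[of _ 1] exI[of _ "parity_init n"] exI[of _ "parity_unitaries n"]
        exI[of _ "{pair_snd n (npairs n - 1)}"]) simp
next
  fix T assume "\<exists>W U0 Us Acc. quantum_alg n T W U0 Us \<and>
      (\<forall>x\<in>inputs n. 1/2 < quantum_succ n W U0 Us Acc parity x)"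
  then have "n \<le> T + T" using quantum_parity_lower_bound by blast
  then show "npairs n \<le> T" unfolding npairs_def by linarith
qed

lemma WUQ_parity:
  assumes n: "n \<ge> 1"
  shows "WUQ n parity = real (npairs n)"
proof -
  define P where "P T A \<longleftrightarrow> (case A of (W, U0, Us, Acc :: nat set) \<Rightarrow> quantum_alg n T W U0 Us)" for T A
  define bias where "bias A = (case A of (W, U0, Us, Acc) \<Rightarrow> quantum_bias n W U0 Us Acc parity)" for A
  have "WUQ n parity = Inf {real T + log 2 (1 / (2 * bias A)) | T A. P T A \<and> 0 < bias A}"
    unfolding WUQ_def P_def bias_def by (rule arg_cong[where f = Inf]) fastforce
  also have "\<dots> = real (npairs n)"
  proof (rule Inf_weak_cost_eq)
    let ?A = "(1, parity_init n, parity_unitaries n, {pair_snd n (npairs n - 1)})"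
    show "P (npairs n) ?A" unfolding P_def using quantum_alg_parity[OF n] by simp
    have "quantum_bias n 1 (parity_init n) (parity_unitaries n) {pair_snd n (npairs n - 1)} parity = 1/2"
      unfolding quantum_bias_def
      by (rule bias_eq_half_if_always_correct) (simp_all add: inputs_nonempty quantum_succ_parity[OF n])
    then show "bias ?A = 1/2" by (simp add: bias_def)
  next
    fix T A assume "P T A" "0 < bias A"
    then obtain W U0 Us Acc where A: "A = (W, U0, Us, Acc)" and alg: "quantum_alg n T W U0 Us"
      and pos: "0 < quantum_bias n W U0 Us Acc parity"
      unfolding P_def bias_def by (cases A) auto
    have "\<forall>x\<in>inputs n. quantum_succ n W U0 Us Acc parity x > 1/2"
      using succ_gt_half_if_bias_pos[OF finite_inputs] pos unfolding quantum_bias_def by blast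
    then have "n \<le> T + T" by (rule quantum_parity_lower_bound[OF alg])
    moreover have "quantum_succ n W U0 Us Acc parity (replicate n False) \<le> 1"
      unfolding quantum_succ_def q_prob1_def by (simp add: parity_def sum_nonneg)
    then have "quantum_bias n W U0 Us Acc parity \<le> 1/2"
      unfolding quantum_bias_def by (rule bias_le_half[OF finite_inputs zero_input_in_inputs])
    ultimately show "npairs n \<le> T \<and> bias A \<le> 1/2" unfolding A bias_def npairs_def by simp
  qed
  finally show ?thesis .
qed

theorem mainTheorem10:
  fixes n :: nat
  assumes "n \<ge> 1"
  shows "UC n parity = n \<and> WUC n parity = real n \<and>
         int (UQ n parity) = \<lceil>real n / 2\<rceil> \<and> WUQ n parity = of_int \<lceil>real n / 2\<rceil>"
  using UC_parity WUC_parity UQ_parity[OF assms] WUQ_parity[OF assms] npairs_eq_ceiling[of n]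
  by (metis of_int_of_nat_eq)

end
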